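(* Let $G$ be a compact Hausdorff group acting (strongly continuously) on a unital $C^*$-algebra $A$, and suppose there is a unital $*$-homomorphism $\psi:A\to A\circledast C(G)$ that is equivariant for the given action on $A$ and the diagonal action on $A\circledast C(G)$. Then for every $n\in\mathbb{Z}^+$ there is a unital $G$-equivariant $*$-homomorphism $\psi_n:A\to C(G^{*n})$, where $C(G^{*n})$ carries the action induced by the diagonal action of $G$ on the $n$-fold iterated join $G^{*n}$.
   Context: For a unital $C^*$-algebra $A$ with a $G$-action $\alpha$, $A\circledast C(G)=\{f\in C([0,1],A\otimes C(G)): f(0)\in\mathbb{C}1_A\otimes C(G),\ f(1)\in A\otimes\mathbb{C}1\}$ with diagonal action $(g\cdot f)(t)=(\alpha_g\otimes\rho_g)(f(t))$, $\rho_g$ being right translation on $C(G)$. The topological join of compact spaces $X,Y$ is $X*Y=[0,1]\times X\times Y/\sim$ where $(0,x_0,y)\sim(0,x_1,y)$ and $(1,x,y_0)\sim(1,x,y_1)$ for all $x_i\in X$, $y_i\in Y$. The iterated join is $G^{*1}=G$, $G^{*(n+1)}=G*G^{*n}$, with $G$ acting diagonally (by right multiplication on each copy of $G$, trivially on the join parameters); $C(G^{*n})$ carries the induced action. *)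

theory Defs
  imports "HOL-Analysis.Analysis"
begin

record 'a cstar_alg =
  cs_carrier :: "'a set"
  cs_zero :: 'a
  cs_one :: 'a
  cs_add :: "'a \<Rightarrow> 'a \<Rightarrow> 'a"
  cs_mult :: "'a \<Rightarrow> 'a \<Rightarrow> 'a"
  cs_smult :: "complex \<Rightarrow> 'a \<Rightarrow> 'a"
  cs_star :: "'a \<Rightarrow> 'a"
  cs_norm :: "'a \<Rightarrow> real"

definition cs_diff :: "'a cstar_alg \<Rightarrow> 'a \<Rightarrow> 'a \<Rightarrow> 'a" where
  "cs_diff A a b = cs_add A a (cs_smult A (-1) b)"

definition cs_closed :: "'a cstar_alg \<Rightarrow> bool" where
  "cs_closed A \<longleftrightarrow> (let C = cs_carrier A in
     cs_zero A \<in> C \<and> cs_one A \<in> C \<and>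
     (\<forall>a\<in>C. \<forall>b\<in>C. cs_add A a b \<in> C \<and> cs_mult A a b \<in> C) \<and>
     (\<forall>c. \<forall>a\<in>C. cs_smult A c a \<in> C) \<and> (\<forall>a\<in>C. cs_star A a \<in> C))"

definition cs_vector_space :: "'a cstar_alg \<Rightarrow> bool" where
  "cs_vector_space A \<longleftrightarrow> (let C = cs_carrier A; add = cs_add A; sm = cs_smult A in
     (\<forall>a\<in>C. \<forall>b\<in>C. \<forall>c\<in>C. add (add a b) c = add a (add b c)) \<and>
     (\<forall>a\<in>C. \<forall>b\<in>C. add a b = add b a) \<and>
     (\<forall>a\<in>C. add a (cs_zero A) = a) \<and>
     (\<forall>a\<in>C. add a (sm (-1) a) = cs_zero A) \<and>
     (\<forall>a\<in>C. sm 1 a = a) \<and>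
     (\<forall>c d. \<forall>a\<in>C. sm c (sm d a) = sm (c * d) a) \<and>
     (\<forall>c d. \<forall>a\<in>C. sm (c + d) a = add (sm c a) (sm d a)) \<and>
     (\<forall>c. \<forall>a\<in>C. \<forall>b\<in>C. sm c (add a b) = add (sm c a) (sm c b)))"

definition cs_unital_algebra :: "'a cstar_alg \<Rightarrow> bool" where
  "cs_unital_algebra A \<longleftrightarrow> (let C = cs_carrier A; add = cs_add A; mul = cs_mult A; sm = cs_smult A in
     (\<forall>a\<in>C. \<forall>b\<in>C. \<forall>c\<in>C. mul (mul a b) c = mul a (mul b c)) \<and>
     (\<forall>a\<in>C. \<forall>b\<in>C. \<forall>c\<in>C. mul a (add b c) = add (mul a b) (mul a c)) \<and>
     (\<forall>a\<in>C. \<forall>b\<in>C. \<forall>c\<in>C. mul (add a b) c = add (mul a c) (mul b c)) \<and>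
     (\<forall>k. \<forall>a\<in>C. \<forall>b\<in>C. mul (sm k a) b = sm k (mul a b) \<and> mul a (sm k b) = sm k (mul a b)) \<and>
     (\<forall>a\<in>C. mul (cs_one A) a = a \<and> mul a (cs_one A) = a))"

definition cs_involution :: "'a cstar_alg \<Rightarrow> bool" where
  "cs_involution A \<longleftrightarrow> (let C = cs_carrier A; st = cs_star A in
     (\<forall>a\<in>C. st (st a) = a) \<and>
     (\<forall>a\<in>C. \<forall>b\<in>C. st (cs_add A a b) = cs_add A (st a) (st b)) \<and>
     (\<forall>k. \<forall>a\<in>C. st (cs_smult A k a) = cs_smult A (cnj k) (st a)) \<and>
     (\<forall>a\<in>C. \<forall>b\<in>C. st (cs_mult A a b) = cs_mult A (st b) (st a)))"

definition cs_cstar_norm :: "'a cstar_alg \<Rightarrow> bool" where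
  "cs_cstar_norm A \<longleftrightarrow> (let C = cs_carrier A; nm = cs_norm A in
     (\<forall>a\<in>C. 0 \<le> nm a) \<and>
     (\<forall>a\<in>C. nm a = 0 \<longleftrightarrow> a = cs_zero A) \<and>
     (\<forall>k. \<forall>a\<in>C. nm (cs_smult A k a) = cmod k * nm a) \<and>
     (\<forall>a\<in>C. \<forall>b\<in>C. nm (cs_add A a b) \<le> nm a + nm b) \<and>
     (\<forall>a\<in>C. \<forall>b\<in>C. nm (cs_mult A a b) \<le> nm a * nm b) \<and>
     (\<forall>a\<in>C. nm (cs_mult A (cs_star A a) a) = (nm a)\<^sup>2) \<and>
     (\<forall>X::nat \<Rightarrow> 'a. (\<forall>n. X n \<in> C) \<and>
          (\<forall>e>0. \<exists>N. \<forall>m\<ge>N. \<forall>n\<ge>N. nm (cs_diff A (X m) (X n)) < e) \<longrightarrow>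
          (\<exists>L\<in>C. \<forall>e>0. \<exists>N. \<forall>n\<ge>N. nm (cs_diff A (X n) L) < e)))"

definition unital_cstar_alg :: "'a cstar_alg \<Rightarrow> bool" where
  "unital_cstar_alg A \<longleftrightarrow> cs_closed A \<and> cs_vector_space A \<and> cs_unital_algebra A \<and>
     cs_involution A \<and> cs_cstar_norm A \<and> cs_one A \<noteq> cs_zero A"

definition unital_star_hom :: "'a cstar_alg \<Rightarrow> 'b cstar_alg \<Rightarrow> ('a \<Rightarrow> 'b) \<Rightarrow> bool" where
  "unital_star_hom A B f \<longleftrightarrow> (let C = cs_carrier A in
     (\<forall>a\<in>C. f a \<in> cs_carrier B) \<and>
     (\<forall>a\<in>C. \<forall>b\<in>C. f (cs_add A a b) = cs_add B (f a) (f b)) \<and>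
     (\<forall>a\<in>C. \<forall>b\<in>C. f (cs_mult A a b) = cs_mult B (f a) (f b)) \<and>
     (\<forall>k. \<forall>a\<in>C. f (cs_smult A k a) = cs_smult B k (f a)) \<and>
     (\<forall>a\<in>C. f (cs_star A a) = cs_star B (f a)) \<and>
     f (cs_one A) = cs_one B)"

definition cs_continuous_on :: "'a cstar_alg \<Rightarrow> 'x::topological_space set \<Rightarrow> ('x \<Rightarrow> 'a) \<Rightarrow> bool" where
  "cs_continuous_on A S F \<longleftrightarrow>
     (\<forall>x\<in>S. \<forall>e>0. eventually (\<lambda>y. cs_norm A (cs_diff A (F y) (F x)) < e) (at x within S))"

text \<open>A strongly continuous action of the (additively written, not necessarily
 commutative) topological group 'g on A by unital *-automorphisms: g acts by alpha g.\<close>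
definition cstar_action :: "'a cstar_alg \<Rightarrow> ('g::topological_group_add \<Rightarrow> 'a \<Rightarrow> 'a) \<Rightarrow> bool" where
  "cstar_action A \<alpha> \<longleftrightarrow>
     (\<forall>g. unital_star_hom A A (\<alpha> g)) \<and>
     (\<forall>a\<in>cs_carrier A. \<alpha> 0 a = a) \<and>
     (\<forall>g h. \<forall>a\<in>cs_carrier A. \<alpha> (g + h) a = \<alpha> g (\<alpha> h a)) \<and>
     (\<forall>a\<in>cs_carrier A. cs_continuous_on A UNIV (\<lambda>g. \<alpha> g a))"

text \<open>Using A \<otimes> C(G) = C(G,A), an element of C([0,1], A \<otimes> C(G)) is a jointly
 continuous map f : [0,1] \<times> G \<rightarrow> A, written curried as f t g; algebra operations
 are pointwise.\<close>
definition join_alg_mem :: "'a cstar_alg \<Rightarrow> (real \<Rightarrow> 'g::topological_space \<Rightarrow> 'a) \<Rightarrow> bool" where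
  "join_alg_mem A f \<longleftrightarrow>
     (\<forall>t\<in>{0..1}. \<forall>g. f t g \<in> cs_carrier A) \<and>
     cs_continuous_on A ({0..1} \<times> UNIV) (\<lambda>(t, g). f t g) \<and>
     (\<forall>g. \<exists>c. f 0 g = cs_smult A c (cs_one A)) \<and>
     (\<forall>g h. f 1 g = f 1 h)"

definition equivariant_join_hom ::
  "'a cstar_alg \<Rightarrow> ('g::topological_group_add \<Rightarrow> 'a \<Rightarrow> 'a) \<Rightarrow> ('a \<Rightarrow> real \<Rightarrow> 'g \<Rightarrow> 'a) \<Rightarrow> bool" where
  "equivariant_join_hom A \<alpha> \<psi> \<longleftrightarrow> (let C = cs_carrier A in
     (\<forall>a\<in>C. join_alg_mem A (\<psi> a)) \<and>
     (\<forall>t\<in>{0..1}. \<forall>g.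
        (\<forall>a\<in>C. \<forall>b\<in>C. \<psi> (cs_add A a b) t g = cs_add A (\<psi> a t g) (\<psi> b t g)) \<and>
        (\<forall>a\<in>C. \<forall>b\<in>C. \<psi> (cs_mult A a b) t g = cs_mult A (\<psi> a t g) (\<psi> b t g)) \<and>
        (\<forall>k. \<forall>a\<in>C. \<psi> (cs_smult A k a) t g = cs_smult A k (\<psi> a t g)) \<and>
        (\<forall>a\<in>C. \<psi> (cs_star A a) t g = cs_star A (\<psi> a t g)) \<and>
        \<psi> (cs_one A) t g = cs_one A) \<and>
     (\<forall>h. \<forall>a\<in>C. \<forall>t\<in>{0..1}. \<forall>g. \<psi> (\<alpha> h a) t g = \<alpha> h (\<psi> a t (g + h))))"

text \<open>G^{*1} = G, G^{*(k+1)} = G * G^{*k} = ([0,1] \<times> G \<times> G^{*k})/\<sim>. A point of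
 G^{*n} is represented by (t, g) with t 0, ..., t (n-2) in [0,1] and g 0, ..., g (n-1)
 in G, read as (t 0, g 0, (t 1, g 1, ( ... (t (n-2), g (n-2), g (n-1))))).
 Coordinates outside the range are normalised to 0.\<close>
definition join_reps :: "nat \<Rightarrow> ((nat \<Rightarrow> real) \<times> (nat \<Rightarrow> 'g::zero)) set" where
  "join_reps n = {(t, g). (\<forall>i. i < n - 1 \<longrightarrow> t i \<in> {0..1}) \<and> (\<forall>i. n - 1 \<le> i \<longrightarrow> t i = 0)
                        \<and> (\<forall>i. n \<le> i \<longrightarrow> g i = 0)}"

text \<open>Elementary identifications generating the equivalence relation of the iterated
 join: at level k, if t k = 0 the coordinate g k is collapsed; if t k = 1 the whole
 inner join (all coordinates with index > k) is collapsed.\<close>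
definition join_move :: "nat \<Rightarrow> ((nat \<Rightarrow> real) \<times> (nat \<Rightarrow> 'g::zero)) \<Rightarrow> ((nat \<Rightarrow> real) \<times> (nat \<Rightarrow> 'g)) \<Rightarrow> bool" where
  "join_move n x y \<longleftrightarrow> x \<in> join_reps n \<and> y \<in> join_reps n \<and>
     (\<exists>k < n - 1.
        (fst x = fst y \<and> fst x k = 0 \<and> (\<forall>i. i \<noteq> k \<longrightarrow> snd x i = snd y i)) \<or>
        (fst x k = 1 \<and> fst y k = 1 \<and> (\<forall>i\<le>k. fst x i = fst y i \<and> snd x i = snd y i)))"

text \<open>C(G^{*n}): continuous complex functions on the representative space that are
 constant on the classes of the join relation (= continuous functions on the quotient).\<close>
definition C_join :: "nat \<Rightarrow> (((nat \<Rightarrow> real) \<times> (nat \<Rightarrow> 'g::{zero,topological_space})) \<Rightarrow> complex) \<Rightarrow> bool" where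
  "C_join n F \<longleftrightarrow> continuous_on (join_reps n) F \<and> (\<forall>x y. join_move n x y \<longrightarrow> F x = F y)"

definition join_act :: "nat \<Rightarrow> 'g::plus \<Rightarrow> ((nat \<Rightarrow> real) \<times> (nat \<Rightarrow> 'g)) \<Rightarrow> ((nat \<Rightarrow> real) \<times> (nat \<Rightarrow> 'g))" where
  "join_act n h x = (fst x, \<lambda>i. if i < n then snd x i + h else snd x i)"

definition equivariant_join_power_hom ::
  "'a cstar_alg \<Rightarrow> ('g::{topological_group_add} \<Rightarrow> 'a \<Rightarrow> 'a) \<Rightarrow> nat \<Rightarrow>
   ('a \<Rightarrow> ((nat \<Rightarrow> real) \<times> (nat \<Rightarrow> 'g)) \<Rightarrow> complex) \<Rightarrow> bool" where
  "equivariant_join_power_hom A \<alpha> n \<phi> \<longleftrightarrow> (let C = cs_carrier A in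
     (\<forall>a\<in>C. C_join n (\<phi> a)) \<and>
     (\<forall>x\<in>join_reps n.
        (\<forall>a\<in>C. \<forall>b\<in>C. \<phi> (cs_add A a b) x = \<phi> a x + \<phi> b x) \<and>
        (\<forall>a\<in>C. \<forall>b\<in>C. \<phi> (cs_mult A a b) x = \<phi> a x * \<phi> b x) \<and>
        (\<forall>k. \<forall>a\<in>C. \<phi> (cs_smult A k a) x = k * \<phi> a x) \<and>
        (\<forall>a\<in>C. \<phi> (cs_star A a) x = cnj (\<phi> a x)) \<and>
        \<phi> (cs_one A) x = 1) \<and>
     (\<forall>h. \<forall>a\<in>C. \<forall>x\<in>join_reps n. \<phi> (\<alpha> h a) x = \<phi> a (join_act n h x)))"

end

(*
  Write a point of G^{*(n+1)} = G * G^{*n} as (t, g, x). The maps are built recursively: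
  psi_1 a g is the scalar psi(a)(0, g), and psi_{n+1} a (t, g, x) = psi_n (psi(a)(1 - t, g)) x.
  Each a |-> psi_n a x is a character of A, a character composed with the unital
  *-homomorphisms a |-> psi(a)(s, g), and equivariance of psi passes through the recursion.
  The parameter enters as 1 - t so that the boundary conditions on psi(a) (scalar at time 0,
  independent of g at time 1) match the collapses of the join: at t = 0 the value psi(a)(1, g)
  does not depend on g, and at t = 1 the element psi(a)(0, g) is a scalar, on which every
  character is constant.
  Continuity in x needs that characters are contractive, |chi b| <= ||b||; this is the
  Neumann series argument (1 - b is invertible when ||b|| < 1).
*)

theory Submission
  imports Defs
begin

locale unital_cstar =
  fixes A :: "'a cstar_alg"
  assumes unital_cstar: "unital_cstar_alg A"
begin

abbreviation carr :: "'a set" where "carr \<equiv> cs_carrier A"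
abbreviation zero_A :: 'a ("\<zero>") where "\<zero> \<equiv> cs_zero A"
abbreviation one_A :: 'a ("\<one>") where "\<one> \<equiv> cs_one A"
abbreviation add_A (infixl "\<oplus>" 65) where "a \<oplus> b \<equiv> cs_add A a b"
abbreviation diff_A (infixl "\<ominus>" 65) where "a \<ominus> b \<equiv> cs_diff A a b"
abbreviation mult_A (infixl "\<otimes>" 70) where "a \<otimes> b \<equiv> cs_mult A a b"
abbreviation smult_A (infixr "\<odot>" 75) where "c \<odot> a \<equiv> cs_smult A c a"
abbreviation star_A :: "'a \<Rightarrow> 'a" where "star_A \<equiv> cs_star A"
abbreviation norm_A :: "'a \<Rightarrow> real" where "norm_A \<equiv> cs_norm A"

lemma zero_closed [simp]: "\<zero> \<in> carr"
  and one_closed [simp]: "\<one> \<in> carr"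
  and add_closed [simp]: "a \<in> carr \<Longrightarrow> b \<in> carr \<Longrightarrow> a \<oplus> b \<in> carr"
  and mult_closed [simp]: "a \<in> carr \<Longrightarrow> b \<in> carr \<Longrightarrow> a \<otimes> b \<in> carr"
  and smult_closed [simp]: "a \<in> carr \<Longrightarrow> c \<odot> a \<in> carr"
  and star_closed [simp]: "a \<in> carr \<Longrightarrow> star_A a \<in> carr"
  using unital_cstar unfolding unital_cstar_alg_def cs_closed_def Let_def by auto

lemma diff_closed [simp]: "a \<in> carr \<Longrightarrow> b \<in> carr \<Longrightarrow> a \<ominus> b \<in> carr"
  by (simp add: cs_diff_def)

lemma add_assoc: "a \<in> carr \<Longrightarrow> b \<in> carr \<Longrightarrow> c \<in> carr \<Longrightarrow> a \<oplus> b \<oplus> c = a \<oplus> (b \<oplus> c)"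
  and add_commute: "a \<in> carr \<Longrightarrow> b \<in> carr \<Longrightarrow> a \<oplus> b = b \<oplus> a"
  and add_zero [simp]: "a \<in> carr \<Longrightarrow> a \<oplus> \<zero> = a"
  and add_neg [simp]: "a \<in> carr \<Longrightarrow> a \<oplus> (-1) \<odot> a = \<zero>"
  and smult_one [simp]: "a \<in> carr \<Longrightarrow> 1 \<odot> a = a"
  and smult_smult [simp]: "a \<in> carr \<Longrightarrow> k \<odot> l \<odot> a = (k * l) \<odot> a"
  and smult_add_left: "a \<in> carr \<Longrightarrow> (k + l) \<odot> a = k \<odot> a \<oplus> l \<odot> a"
  and smult_add_right: "a \<in> carr \<Longrightarrow> b \<in> carr \<Longrightarrow> k \<odot> (a \<oplus> b) = k \<odot> a \<oplus> k \<odot> b"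
  using unital_cstar unfolding unital_cstar_alg_def cs_vector_space_def Let_def by auto

lemma mult_add_right: "a \<in> carr \<Longrightarrow> b \<in> carr \<Longrightarrow> c \<in> carr \<Longrightarrow> a \<otimes> (b \<oplus> c) = a \<otimes> b \<oplus> a \<otimes> c"
  and mult_add_left: "a \<in> carr \<Longrightarrow> b \<in> carr \<Longrightarrow> c \<in> carr \<Longrightarrow> (a \<oplus> b) \<otimes> c = a \<otimes> c \<oplus> b \<otimes> c"
  and mult_smult_left [simp]: "a \<in> carr \<Longrightarrow> b \<in> carr \<Longrightarrow> (k \<odot> a) \<otimes> b = k \<odot> (a \<otimes> b)"
  and mult_smult_right [simp]: "a \<in> carr \<Longrightarrow> b \<in> carr \<Longrightarrow> a \<otimes> (k \<odot> b) = k \<odot> (a \<otimes> b)"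
  and one_mult [simp]: "a \<in> carr \<Longrightarrow> \<one> \<otimes> a = a"
  and mult_one [simp]: "a \<in> carr \<Longrightarrow> a \<otimes> \<one> = a"
  using unital_cstar unfolding unital_cstar_alg_def cs_unital_algebra_def Let_def by auto

lemma star_star [simp]: "a \<in> carr \<Longrightarrow> star_A (star_A a) = a"
  and star_smult [simp]: "a \<in> carr \<Longrightarrow> star_A (c \<odot> a) = cnj c \<odot> star_A a"
  and star_mult: "a \<in> carr \<Longrightarrow> b \<in> carr \<Longrightarrow> star_A (a \<otimes> b) = star_A b \<otimes> star_A a"
  using unital_cstar unfolding unital_cstar_alg_def cs_involution_def Let_def by auto

lemma norm_nonneg: "a \<in> carr \<Longrightarrow> 0 \<le> norm_A a"
  and norm_eq_zero_iff: "a \<in> carr \<Longrightarrow> norm_A a = 0 \<longleftrightarrow> a = \<zero>"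
  and norm_smult: "a \<in> carr \<Longrightarrow> norm_A (c \<odot> a) = cmod c * norm_A a"
  and norm_triangle: "a \<in> carr \<Longrightarrow> b \<in> carr \<Longrightarrow> norm_A (a \<oplus> b) \<le> norm_A a + norm_A b"
  and norm_mult_le: "a \<in> carr \<Longrightarrow> b \<in> carr \<Longrightarrow> norm_A (a \<otimes> b) \<le> norm_A a * norm_A b"
  using unital_cstar unfolding unital_cstar_alg_def cs_cstar_norm_def Let_def by auto

lemma complete:
  fixes X :: "nat \<Rightarrow> 'a"
  assumes "\<And>n. X n \<in> carr" and "\<forall>e>0. \<exists>N. \<forall>m\<ge>N. \<forall>n\<ge>N. norm_A (X m \<ominus> X n) < e"
  shows "\<exists>L\<in>carr. \<forall>e>0. \<exists>N. \<forall>n\<ge>N. norm_A (X n \<ominus> L) < e"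
proof -
  have "cs_cstar_norm A"
    using unital_cstar unfolding unital_cstar_alg_def by simp
  then have "\<forall>X :: nat \<Rightarrow> 'a. (\<forall>n. X n \<in> carr) \<and> (\<forall>e>0. \<exists>N. \<forall>m\<ge>N. \<forall>n\<ge>N. norm_A (X m \<ominus> X n) < e) \<longrightarrow>
      (\<exists>L\<in>carr. \<forall>e>0. \<exists>N. \<forall>n\<ge>N. norm_A (X n \<ominus> L) < e)"
    unfolding cs_cstar_norm_def Let_def by (elim conjE) assumption
  then show ?thesis
    using assms by blast
qed

lemma one_neq_zero: "\<one> \<noteq> \<zero>"
  using unital_cstar unfolding unital_cstar_alg_def by simp

lemma norm_one_pos: "norm_A \<one> > 0"
  using norm_nonneg[of \<one>] norm_eq_zero_iff[of \<one>] one_neq_zero by fastforce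

lemma norm_zero [simp]: "norm_A \<zero> = 0"
  by (simp add: norm_eq_zero_iff)

lemma smult_zero [simp]: "a \<in> carr \<Longrightarrow> 0 \<odot> a = \<zero>"
  using norm_smult[of a 0] norm_eq_zero_iff[of "0 \<odot> a"] by simp

lemma zero_add [simp]: "a \<in> carr \<Longrightarrow> \<zero> \<oplus> a = a"
  using add_commute[of \<zero> a] by simp

lemma mult_zero_right [simp]: "a \<in> carr \<Longrightarrow> a \<otimes> \<zero> = \<zero>"
  using mult_smult_right[of a \<zero> 0] by simp

lemma diff_self [simp]: "a \<in> carr \<Longrightarrow> a \<ominus> a = \<zero>"
  by (simp add: cs_diff_def)

lemma neg_add [simp]: "a \<in> carr \<Longrightarrow> (-1) \<odot> a \<oplus> a = \<zero>"
  by (subst add_commute) simp_all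

lemma neg_add_cancel_left [simp]: "a \<in> carr \<Longrightarrow> b \<in> carr \<Longrightarrow> (-1) \<odot> a \<oplus> (a \<oplus> b) = b"
  by (simp flip: add_assoc)

lemma add_neg_cancel_left [simp]: "a \<in> carr \<Longrightarrow> b \<in> carr \<Longrightarrow> a \<oplus> ((-1) \<odot> a \<oplus> b) = b"
  by (simp flip: add_assoc)

lemma diff_add_diff: "a \<in> carr \<Longrightarrow> b \<in> carr \<Longrightarrow> c \<in> carr \<Longrightarrow> (a \<ominus> b) \<oplus> (b \<ominus> c) = a \<ominus> c"
  unfolding cs_diff_def by (simp add: add_assoc)

lemma diff_add_cancel: "a \<in> carr \<Longrightarrow> b \<in> carr \<Longrightarrow> (a \<ominus> b) \<oplus> b = a"
  unfolding cs_diff_def by (simp add: add_assoc)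

lemma add_diff_cancel_left: "a \<in> carr \<Longrightarrow> b \<in> carr \<Longrightarrow> (a \<oplus> b) \<ominus> a = b"
  unfolding cs_diff_def by (subst add_commute[of a b]) (simp_all add: add_assoc)

lemma eq_of_diff_eq_zero:
  assumes "a \<in> carr" "b \<in> carr" "a \<ominus> b = \<zero>"
  shows "a = b"
  using diff_add_cancel[of a b] assms by simp

lemma neg_diff: "a \<in> carr \<Longrightarrow> b \<in> carr \<Longrightarrow> (-1) \<odot> (a \<ominus> b) = b \<ominus> a"
  unfolding cs_diff_def by (simp add: smult_add_right add_commute[of "(-1) \<odot> a"])

lemma diff_diff_cancel [simp]: "a \<in> carr \<Longrightarrow> b \<in> carr \<Longrightarrow> a \<ominus> (a \<ominus> b) = b"
  unfolding cs_diff_def by (simp add: smult_add_right)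

lemma norm_diff_commute: "a \<in> carr \<Longrightarrow> b \<in> carr \<Longrightarrow> norm_A (a \<ominus> b) = norm_A (b \<ominus> a)"
  using norm_smult[of "a \<ominus> b" "-1"] by (simp add: neg_diff)

lemma norm_diff_triangle:
  "a \<in> carr \<Longrightarrow> b \<in> carr \<Longrightarrow> c \<in> carr \<Longrightarrow> norm_A (a \<ominus> c) \<le> norm_A (a \<ominus> b) + norm_A (b \<ominus> c)"
  using norm_triangle[of "a \<ominus> b" "b \<ominus> c"] by (simp add: diff_add_diff)

lemma mult_diff_right: "a \<in> carr \<Longrightarrow> b \<in> carr \<Longrightarrow> c \<in> carr \<Longrightarrow> a \<otimes> (b \<ominus> c) = a \<otimes> b \<ominus> a \<otimes> c"
  unfolding cs_diff_def by (simp add: mult_add_right)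

lemma mult_diff_left: "a \<in> carr \<Longrightarrow> b \<in> carr \<Longrightarrow> c \<in> carr \<Longrightarrow> (a \<ominus> b) \<otimes> c = a \<otimes> c \<ominus> b \<otimes> c"
  unfolding cs_diff_def by (simp add: mult_add_left)

lemma diff_smult_one: "c \<odot> \<one> \<ominus> d \<odot> \<one> = (c - d) \<odot> \<one>"
  unfolding cs_diff_def using smult_add_left[of \<one> c "-d"] by simp

lemma smult_one_inject: "c \<odot> \<one> = d \<odot> \<one> \<longleftrightarrow> c = d"
proof
  assume "c \<odot> \<one> = d \<odot> \<one>"
  then have "norm_A ((c - d) \<odot> \<one>) = 0"
    by (simp flip: diff_smult_one)
  then show "c = d"
    using norm_one_pos by (simp add: norm_smult)
qed simp

lemma star_one [simp]: "star_A \<one> = \<one>"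
  using star_mult[of "star_A \<one>" \<one>] by simp

end

primrec cs_power :: "'a cstar_alg \<Rightarrow> 'a \<Rightarrow> nat \<Rightarrow> 'a" where
  "cs_power A b 0 = cs_one A"
| "cs_power A b (Suc m) = cs_mult A b (cs_power A b m)"

primrec cs_geometric_sum :: "'a cstar_alg \<Rightarrow> 'a \<Rightarrow> nat \<Rightarrow> 'a" where
  "cs_geometric_sum A b 0 = cs_zero A"
| "cs_geometric_sum A b (Suc m) = cs_add A (cs_geometric_sum A b m) (cs_power A b m)"

context unital_cstar
begin

lemma cs_power_closed [simp]: "b \<in> carr \<Longrightarrow> cs_power A b m \<in> carr"
  by (induction m) simp_all

lemma cs_geometric_sum_closed [simp]: "b \<in> carr \<Longrightarrow> cs_geometric_sum A b m \<in> carr"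
  by (induction m) simp_all

lemma norm_cs_power_le:
  assumes b: "b \<in> carr"
  shows "norm_A (cs_power A b m) \<le> norm_A \<one> * norm_A b ^ m"
proof (induction m)
  case (Suc m)
  have "norm_A (cs_power A b (Suc m)) \<le> norm_A b * norm_A (cs_power A b m)"
    using b by (simp add: norm_mult_le)
  also have "\<dots> \<le> norm_A b * (norm_A \<one> * norm_A b ^ m)"
    using Suc b by (simp add: mult_left_mono norm_nonneg)
  finally show ?case
    by (simp add: algebra_simps)
qed simp

lemma norm_geometric_sum_diff_le:
  assumes b: "b \<in> carr"
  defines "T \<equiv> \<lambda>m. \<Sum>i<m. norm_A \<one> * norm_A b ^ i"
  shows "norm_A (cs_geometric_sum A b (n + k) \<ominus> cs_geometric_sum A b n) \<le> T (n + k) - T n"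
proof (induction k)
  case (Suc k)
  let ?S = "cs_geometric_sum A b" and ?P = "cs_power A b (n + k)"
  have "norm_A (?S (n + Suc k) \<ominus> ?S n) \<le> norm_A ((?S (n + k) \<oplus> ?P) \<ominus> ?S (n + k)) + norm_A (?S (n + k) \<ominus> ?S n)"
    using b by (simp add: norm_diff_triangle)
  also have "\<dots> \<le> norm_A \<one> * norm_A b ^ (n + k) + (T (n + k) - T n)"
    using Suc b by (simp add: add_diff_cancel_left norm_cs_power_le add_mono)
  finally show ?case
    by (simp add: T_def)
qed (simp add: b)

lemma geometric_sum_Cauchy:
  assumes b: "b \<in> carr" and r: "norm_A b < 1"
  shows "\<forall>e>0. \<exists>N. \<forall>m\<ge>N. \<forall>n\<ge>N. norm_A (cs_geometric_sum A b m \<ominus> cs_geometric_sum A b n) < e"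
proof (intro allI impI)
  fix e :: real
  assume e: "e > 0"
  let ?S = "cs_geometric_sum A b"
  define T where "T m = (\<Sum>i<m. norm_A \<one> * norm_A b ^ i)" for m
  have "summable (\<lambda>i. norm_A \<one> * norm_A b ^ i)"
    using b r norm_nonneg[of b] by (intro summable_mult summable_geometric) simp
  then have "T \<longlonglongrightarrow> (\<Sum>i. norm_A \<one> * norm_A b ^ i)"
    unfolding T_def by (rule summable_LIMSEQ)
  then have "Cauchy T"
    by (intro convergent_Cauchy convergentI)
  then obtain N where N: "\<And>m n. m \<ge> N \<Longrightarrow> n \<ge> N \<Longrightarrow> dist (T m) (T n) < e"
    using e unfolding Cauchy_def by blast
  have close: "norm_A (?S m \<ominus> ?S n) < e" if "n \<le> m" "n \<ge> N" for m n
  proof -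
    obtain k where m: "m = n + k"
      using le_Suc_ex[OF \<open>n \<le> m\<close>] by blast
    have "norm_A (?S m \<ominus> ?S n) \<le> T m - T n"
      unfolding m T_def using norm_geometric_sum_diff_le[OF b] .
    also have "\<dots> \<le> dist (T m) (T n)"
      by (simp add: dist_real_def)
    also have "\<dots> < e"
      using N that by simp
    finally show ?thesis .
  qed
  show "\<exists>N. \<forall>m\<ge>N. \<forall>n\<ge>N. norm_A (?S m \<ominus> ?S n) < e"
  proof (intro exI allI impI)
    fix m n
    assume "m \<ge> N" "n \<ge> N"
    then show "norm_A (?S m \<ominus> ?S n) < e"
      using close[of n m] close[of m n] norm_diff_commute[of "?S m" "?S n"] b
      by (cases "n \<le> m") simp_all
  qed
qed

lemma one_minus_mult_geometric_sum:
  assumes b: "b \<in> carr"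
  shows "(\<one> \<ominus> b) \<otimes> cs_geometric_sum A b m = \<one> \<ominus> cs_power A b m"
proof (induction m)
  case (Suc m)
  let ?P = "cs_power A b m"
  have "(\<one> \<ominus> b) \<otimes> cs_geometric_sum A b (Suc m) = (\<one> \<ominus> ?P) \<oplus> (?P \<ominus> b \<otimes> ?P)"
    using Suc b by (simp add: mult_add_right mult_diff_left)
  also have "\<dots> = \<one> \<ominus> cs_power A b (Suc m)"
    using b by (simp add: diff_add_diff)
  finally show ?case .
qed (simp add: b)

lemma one_minus_right_invertible:
  assumes b: "b \<in> carr" and r: "norm_A b < 1"
  shows "\<exists>L\<in>carr. (\<one> \<ominus> b) \<otimes> L = \<one>"
proof -
  let ?S = "cs_geometric_sum A b" and ?P = "cs_power A b" and ?D = "\<one> \<ominus> b"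
  obtain L where L: "L \<in> carr" and conv: "\<forall>e>0. \<exists>N. \<forall>n\<ge>N. norm_A (?S n \<ominus> L) < e"
    using complete[of ?S] geometric_sum_Cauchy[OF b r] b by auto
  have D: "?D \<in> carr"
    using b by simp
  have tail_lim: "(\<lambda>m. norm_A (L \<ominus> ?S m)) \<longlonglongrightarrow> 0"
    unfolding LIMSEQ_iff using conv b L by (simp add: norm_diff_commute norm_nonneg)
  have power_lim: "(\<lambda>m. norm_A (?P m)) \<longlonglongrightarrow> 0"
  proof (rule Lim_null_comparison)
    show "\<forall>\<^sub>F m in sequentially. norm (norm_A (?P m)) \<le> norm_A \<one> * norm_A b ^ m"
      using b by (simp add: norm_nonneg norm_cs_power_le)
    show "(\<lambda>m. norm_A \<one> * norm_A b ^ m) \<longlonglongrightarrow> 0"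
      using r norm_nonneg[OF b] by (intro tendsto_mult_right_zero LIMSEQ_realpow_zero)
  qed
  have lim: "(\<lambda>m. norm_A ?D * norm_A (L \<ominus> ?S m) + norm_A (?P m)) \<longlonglongrightarrow> 0"
    using tendsto_add_zero[OF tendsto_mult_right_zero[OF tail_lim] power_lim] .
  have bound: "norm_A (?D \<otimes> L \<ominus> \<one>) \<le> norm_A ?D * norm_A (L \<ominus> ?S m) + norm_A (?P m)" for m
  proof -
    have "norm_A (?D \<otimes> L \<ominus> \<one>) \<le> norm_A (?D \<otimes> L \<ominus> ?D \<otimes> ?S m) + norm_A (?D \<otimes> ?S m \<ominus> \<one>)"
      using D L b by (simp add: norm_diff_triangle)
    also have "norm_A (?D \<otimes> L \<ominus> ?D \<otimes> ?S m) \<le> norm_A ?D * norm_A (L \<ominus> ?S m)"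
      using D L b by (simp flip: mult_diff_right add: norm_mult_le)
    also have "norm_A (?D \<otimes> ?S m \<ominus> \<one>) = norm_A (?P m)"
      using b by (simp add: one_minus_mult_geometric_sum norm_diff_commute[of _ \<one>])
    finally show ?thesis
      by simp
  qed
  have "norm_A (?D \<otimes> L \<ominus> \<one>) \<le> 0"
    by (rule LIMSEQ_le_const[OF lim], rule exI[of _ 0]) (simp add: bound)
  then have "?D \<otimes> L \<ominus> \<one> = \<zero>"
    using norm_nonneg[of "?D \<otimes> L \<ominus> \<one>"] norm_eq_zero_iff[of "?D \<otimes> L \<ominus> \<one>"] D L by simp
  then have "?D \<otimes> L = \<one>"
    using D L by (simp add: eq_of_diff_eq_zero)
  with L show ?thesis
    by blast
qed

end

definition complex_cstar :: "complex cstar_alg" where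
  "complex_cstar = \<lparr>cs_carrier = UNIV, cs_zero = 0, cs_one = 1, cs_add = (+), cs_mult = (*),
     cs_smult = (*), cs_star = cnj, cs_norm = cmod\<rparr>"

lemma unital_star_hom_complex_iff:
  "unital_star_hom A complex_cstar f \<longleftrightarrow>
     (\<forall>a\<in>cs_carrier A. \<forall>b\<in>cs_carrier A. f (cs_add A a b) = f a + f b) \<and>
     (\<forall>a\<in>cs_carrier A. \<forall>b\<in>cs_carrier A. f (cs_mult A a b) = f a * f b) \<and>
     (\<forall>k. \<forall>a\<in>cs_carrier A. f (cs_smult A k a) = k * f a) \<and>
     (\<forall>a\<in>cs_carrier A. f (cs_star A a) = cnj (f a)) \<and>
     f (cs_one A) = 1"
  by (simp add: unital_star_hom_def complex_cstar_def Let_def)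

lemma unital_star_hom_comp:
  "unital_star_hom A B f \<Longrightarrow> unital_star_hom B C g \<Longrightarrow> unital_star_hom A C (g \<circ> f)"
  unfolding unital_star_hom_def Let_def by simp

definition scalar_coeff :: "'a cstar_alg \<Rightarrow> 'a \<Rightarrow> complex" where
  "scalar_coeff A b = (SOME c. b = cs_smult A c (cs_one A))"

context unital_cstar
begin

lemma unital_star_hom_smult_one:
  "unital_star_hom A B f \<Longrightarrow> f (c \<odot> \<one>) = cs_smult B c (cs_one B)"
  unfolding unital_star_hom_def Let_def by simp

lemma character_diff:
  "unital_star_hom A complex_cstar f \<Longrightarrow> a \<in> carr \<Longrightarrow> b \<in> carr \<Longrightarrow> f (a \<ominus> b) = f a - f b"
  unfolding unital_star_hom_complex_iff cs_diff_def by simp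

lemma norm_character_le:
  assumes f: "unital_star_hom A complex_cstar f" and b: "b \<in> carr"
  shows "cmod (f b) \<le> norm_A b"
proof (rule ccontr)
  assume "\<not> cmod (f b) \<le> norm_A b"
  then have less: "norm_A b < cmod (f b)" by simp
  then have fb: "f b \<noteq> 0"
    using norm_nonneg[OF b] by auto
  define b' where "b' = (1 / f b) \<odot> b"
  have b': "b' \<in> carr"
    unfolding b'_def using b by simp
  have "f b' = 1"
    unfolding b'_def using f b fb by (simp add: unital_star_hom_complex_iff)
  have "norm_A b' < 1"
    unfolding b'_def using b less fb by (simp add: norm_smult norm_divide)
  then obtain L where L: "L \<in> carr" and inv: "(\<one> \<ominus> b') \<otimes> L = \<one>"
    using one_minus_right_invertible[OF b'] by blast
  have "1 = f ((\<one> \<ominus> b') \<otimes> L)"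
    using f by (simp add: inv unital_star_hom_complex_iff)
  also have "\<dots> = (f \<one> - f b') * f L"
    using f b' L by (simp add: unital_star_hom_complex_iff character_diff)
  also have "\<dots> = 0"
    using f \<open>f b' = 1\<close> by (simp add: unital_star_hom_complex_iff)
  finally show False by simp
qed

lemma scalar_coeff_smult_one [simp]: "scalar_coeff A (c \<odot> \<one>) = c"
  unfolding scalar_coeff_def by (simp add: smult_one_inject)

lemma scalar_coeff_one [simp]: "scalar_coeff A \<one> = 1"
  using scalar_coeff_smult_one[of 1] by simp

lemma character_scalar_coeff:
  assumes h: "unital_star_hom A A h" and scalar: "\<forall>a\<in>carr. \<exists>c. h a = c \<odot> \<one>"
  shows "unital_star_hom A complex_cstar (\<lambda>a. scalar_coeff A (h a))"
proof -
  have hom: "\<forall>a\<in>carr. \<forall>b\<in>carr. h (a \<oplus> b) = h a \<oplus> h b"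
    "\<forall>a\<in>carr. \<forall>b\<in>carr. h (a \<otimes> b) = h a \<otimes> h b"
    "\<forall>k. \<forall>a\<in>carr. h (k \<odot> a) = k \<odot> h a"
    "\<forall>a\<in>carr. h (star_A a) = star_A (h a)"
    "h \<one> = \<one>"
    using h by (simp_all add: unital_star_hom_def Let_def)
  have binary: "scalar_coeff A (h (a \<oplus> b)) = scalar_coeff A (h a) + scalar_coeff A (h b) \<and>
      scalar_coeff A (h (a \<otimes> b)) = scalar_coeff A (h a) * scalar_coeff A (h b)"
    if ab: "a \<in> carr" "b \<in> carr" for a b
  proof -
    obtain c d where "h a = c \<odot> \<one>" "h b = d \<odot> \<one>"
      using scalar ab by blast
    then show ?thesis
      using hom(1,2) ab smult_add_left[of \<one> c d, symmetric] by simp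
  qed
  have unary: "scalar_coeff A (h (k \<odot> a)) = k * scalar_coeff A (h a) \<and>
      scalar_coeff A (h (star_A a)) = cnj (scalar_coeff A (h a))"
    if a: "a \<in> carr" for k a
  proof -
    obtain c where "h a = c \<odot> \<one>"
      using scalar a by blast
    then show ?thesis
      using hom(3,4) a by simp
  qed
  show ?thesis
    unfolding unital_star_hom_complex_iff using binary unary hom(5) by simp
qed

lemma cs_continuous_on_iff_tendsto:
  assumes "\<forall>y\<in>S. F y \<in> carr"
  shows "cs_continuous_on A S F \<longleftrightarrow> (\<forall>x\<in>S. ((\<lambda>y. norm_A (F y \<ominus> F x)) \<longlongrightarrow> 0) (at x within S))"
proof -
  have "(\<forall>e>0. \<forall>\<^sub>F y in at x within S. norm_A (F y \<ominus> F x) < e) \<longleftrightarrow>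
      ((\<lambda>y. norm_A (F y \<ominus> F x)) \<longlongrightarrow> 0) (at x within S)" if x: "x \<in> S" for x
  proof -
    have "\<forall>\<^sub>F y in at x within S. (dist (norm_A (F y \<ominus> F x)) 0 < e) = (norm_A (F y \<ominus> F x) < e)" for e
      unfolding eventually_at_filter
      by (rule always_eventually) (use assms x in \<open>auto simp: norm_nonneg\<close>)
    then have "(\<forall>\<^sub>F y in at x within S. dist (norm_A (F y \<ominus> F x)) 0 < e) =
        (\<forall>\<^sub>F y in at x within S. norm_A (F y \<ominus> F x) < e)" for e
      by (rule eventually_subst)
    then show ?thesis
      unfolding tendsto_iff by simp
  qed
  then show ?thesis
    unfolding cs_continuous_on_def by blast
qed

lemma cs_continuous_on_compose:
  assumes F: "cs_continuous_on A S F" "\<forall>p\<in>S. F p \<in> carr"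
    and m: "continuous_on R m" "m ` R \<subseteq> S"
  shows "cs_continuous_on A R (\<lambda>y. F (m y))"
proof -
  have FmC: "\<forall>y\<in>R. F (m y) \<in> carr"
    using F(2) m(2) by auto
  have "((\<lambda>y. norm_A (F (m y) \<ominus> F (m x))) \<longlongrightarrow> 0) (at x within R)" if x: "x \<in> R" for x
  proof -
    let ?h = "\<lambda>q. norm_A (F q \<ominus> F (m x))"
    have mx: "m x \<in> S"
      using x m(2) by auto
    then have "(?h \<longlongrightarrow> ?h (m x)) (at (m x) within S)"
      using F unfolding cs_continuous_on_iff_tendsto[OF F(2)] by simp
    then have "(?h \<longlongrightarrow> 0) (inf (nhds (m x)) (principal S))"
      using tendsto_at_within_iff_tendsto_nhds[of ?h "m x" S] F(2) mx by simp
    moreover have "filterlim m (inf (nhds (m x)) (principal S)) (at x within R)"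
      unfolding filterlim_inf filterlim_principal
    proof
      show "(m \<longlongrightarrow> m x) (at x within R)"
        using m(1) x unfolding continuous_on_def by blast
      show "\<forall>\<^sub>F y in at x within R. m y \<in> S"
        unfolding eventually_at_filter by (rule always_eventually) (use m(2) in blast)
    qed
    ultimately show ?thesis
      by (rule filterlim_compose)
  qed
  then show ?thesis
    using cs_continuous_on_iff_tendsto[OF FmC] by blast
qed

lemma continuous_on_scalar_coeff:
  assumes B: "cs_continuous_on A S B" and scalar: "\<forall>y\<in>S. \<exists>c. B y = c \<odot> \<one>"
  shows "continuous_on S (\<lambda>y. scalar_coeff A (B y))"
  unfolding continuous_on_def
proof (intro ballI)
  fix x assume x: "x \<in> S"
  have BC: "\<forall>y\<in>S. B y \<in> carr"
  proof
    fix y assume "y \<in> S"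
    from bspec[OF scalar this] obtain c where "B y = c \<odot> \<one>" ..
    then show "B y \<in> carr" by simp
  qed
  have dist_eq: "norm_A (B y \<ominus> B x) / norm_A \<one> = dist (scalar_coeff A (B y)) (scalar_coeff A (B x))"
    if y: "y \<in> S" for y
  proof -
    from bspec[OF scalar y] obtain c where c: "B y = c \<odot> \<one>" ..
    from bspec[OF scalar x] obtain d where d: "B x = d \<odot> \<one>" ..
    show ?thesis
      unfolding c d using norm_one_pos by (simp add: diff_smult_one norm_smult dist_norm)
  qed
  have "((\<lambda>y. norm_A (B y \<ominus> B x)) \<longlongrightarrow> 0) (at x within S)"
    using B x cs_continuous_on_iff_tendsto[OF BC] by simp
  then have "((\<lambda>y. norm_A (B y \<ominus> B x) / norm_A \<one>) \<longlongrightarrow> 0) (at x within S)"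
    by (rule tendsto_divide_zero)
  moreover have "\<forall>\<^sub>F y in at x within S.
      norm_A (B y \<ominus> B x) / norm_A \<one> = dist (scalar_coeff A (B y)) (scalar_coeff A (B x))"
    unfolding eventually_at_filter by (rule always_eventually) (simp add: dist_eq)
  ultimately have "((\<lambda>y. dist (scalar_coeff A (B y)) (scalar_coeff A (B x))) \<longlongrightarrow> 0) (at x within S)"
    by (rule Lim_transform_eventually)
  then show "((\<lambda>y. scalar_coeff A (B y)) \<longlongrightarrow> scalar_coeff A (B x)) (at x within S)"
    by (rule tendsto_dist_iff[THEN iffD2])
qed

lemma continuous_on_apply_contractive:
  assumes F: "\<forall>b\<in>carr. continuous_on S (F b)"
    and contractive: "\<forall>b\<in>carr. \<forall>b'\<in>carr. \<forall>y\<in>S. cmod (F b y - F b' y) \<le> norm_A (b \<ominus> b')"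
    and B: "cs_continuous_on A S B" "\<forall>y\<in>S. B y \<in> carr"
  shows "continuous_on S (\<lambda>y. F (B y) y)"
  unfolding continuous_on_def
proof (intro ballI)
  fix x assume x: "x \<in> S"
  have "((\<lambda>y. dist (F (B y) y) (F (B x) x)) \<longlongrightarrow> 0) (at x within S)"
  proof (rule Lim_null_comparison)
    have "dist (F (B y) y) (F (B x) x) \<le> norm_A (B y \<ominus> B x) + dist (F (B x) y) (F (B x) x)"
      if y: "y \<in> S" for y
    proof -
      have "dist (F (B y) y) (F (B x) x) \<le> dist (F (B y) y) (F (B x) y) + dist (F (B x) y) (F (B x) x)"
        by (rule dist_triangle)
      also have "dist (F (B y) y) (F (B x) y) \<le> norm_A (B y \<ominus> B x)"
        using contractive B(2) x y by (simp add: dist_norm)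
      finally show ?thesis
        by simp
    qed
    then show "\<forall>\<^sub>F y in at x within S.
        norm (dist (F (B y) y) (F (B x) x)) \<le> norm_A (B y \<ominus> B x) + dist (F (B x) y) (F (B x) x)"
      by (simp add: eventually_at_filter)
    have "((\<lambda>y. norm_A (B y \<ominus> B x)) \<longlongrightarrow> 0) (at x within S)"
      using B x cs_continuous_on_iff_tendsto[OF B(2)] by simp
    moreover have "((\<lambda>y. dist (F (B x) y) (F (B x) x)) \<longlongrightarrow> 0) (at x within S)"
      using F B(2) x unfolding continuous_on_def by (simp add: tendsto_dist_iff[symmetric])
    ultimately show "((\<lambda>y. norm_A (B y \<ominus> B x) + dist (F (B x) y) (F (B x) x)) \<longlongrightarrow> 0) (at x within S)"
      by (rule tendsto_add_zero)
  qed
  then show "((\<lambda>y. F (B y) y) \<longlongrightarrow> F (B x) x) (at x within S)"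
    by (rule tendsto_dist_iff[THEN iffD2])
qed

end

definition join_tail :: "(nat \<Rightarrow> real) \<times> (nat \<Rightarrow> 'g) \<Rightarrow> (nat \<Rightarrow> real) \<times> (nat \<Rightarrow> 'g)" where
  "join_tail x = (\<lambda>i. fst x (Suc i), \<lambda>i. snd x (Suc i))"

(* join_power_map A psi n is the map psi_{n+1} : A -> C(G^{*(n+1)}). *)
primrec join_power_map ::
  "'a cstar_alg \<Rightarrow> ('a \<Rightarrow> real \<Rightarrow> 'g \<Rightarrow> 'a) \<Rightarrow> nat \<Rightarrow> 'a \<Rightarrow> (nat \<Rightarrow> real) \<times> (nat \<Rightarrow> 'g) \<Rightarrow> complex"
where
  "join_power_map A \<psi> 0 a x = scalar_coeff A (\<psi> a 0 (snd x 0))"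
| "join_power_map A \<psi> (Suc n) a x = join_power_map A \<psi> n (\<psi> a (1 - fst x 0) (snd x 0)) (join_tail x)"

lemma join_tail_in_join_reps: "x \<in> join_reps (Suc (Suc n)) \<Longrightarrow> join_tail x \<in> join_reps (Suc n)"
  unfolding join_reps_def join_tail_def by auto

lemma join_reps_one_minus_param: "x \<in> join_reps (Suc (Suc n)) \<Longrightarrow> 1 - fst x 0 \<in> {0..1}"
  unfolding join_reps_def by auto

lemma join_tail_join_act: "join_tail (join_act (Suc (Suc n)) h x) = join_act (Suc n) h (join_tail x)"
  unfolding join_tail_def join_act_def by auto

lemma continuous_on_fst_apply: "continuous_on S (\<lambda>x::('i \<Rightarrow> 'b::topological_space) \<times> 'c::topological_space. fst x i)"
  by (rule continuous_on_product_then_coordinatewise[OF continuous_on_fst[OF continuous_on_id]])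

lemma continuous_on_snd_apply: "continuous_on S (\<lambda>x::'c::topological_space \<times> ('i \<Rightarrow> 'b::topological_space). snd x i)"
  by (rule continuous_on_product_then_coordinatewise[OF continuous_on_snd[OF continuous_on_id]])

lemma continuous_on_join_tail: "continuous_on S join_tail"
  unfolding join_tail_def
  by (intro continuous_on_Pair continuous_on_coordinatewise_then_product continuous_on_fst_apply continuous_on_snd_apply)

locale equivariant_join = unital_cstar A for A :: "'a cstar_alg" +
  fixes \<alpha> :: "'g::topological_group_add \<Rightarrow> 'a \<Rightarrow> 'a"
    and \<psi> :: "'a \<Rightarrow> real \<Rightarrow> 'g \<Rightarrow> 'a"
  assumes action: "cstar_action A \<alpha>"
    and equivariant_psi: "equivariant_join_hom A \<alpha> \<psi>"
begin

abbreviation \<Psi> :: "nat \<Rightarrow> 'a \<Rightarrow> (nat \<Rightarrow> real) \<times> (nat \<Rightarrow> 'g) \<Rightarrow> complex" where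
  "\<Psi> \<equiv> join_power_map A \<psi>"

lemma alpha_hom: "unital_star_hom A A (\<alpha> h)"
  using action unfolding cstar_action_def by blast

lemma psi_join_alg_mem: "a \<in> carr \<Longrightarrow> join_alg_mem A (\<psi> a)"
  using equivariant_psi unfolding equivariant_join_hom_def Let_def by blast

lemma psi_closed: "a \<in> carr \<Longrightarrow> t \<in> {0..1} \<Longrightarrow> \<psi> a t g \<in> carr"
  using psi_join_alg_mem unfolding join_alg_mem_def by blast

lemma psi_continuous: "a \<in> carr \<Longrightarrow> cs_continuous_on A ({0..1} \<times> UNIV) (\<lambda>(t, g). \<psi> a t g)"
  using psi_join_alg_mem unfolding join_alg_mem_def by blast

lemma psi_at_zero_scalar: "a \<in> carr \<Longrightarrow> \<exists>c. \<psi> a 0 g = c \<odot> \<one>"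
  using psi_join_alg_mem unfolding join_alg_mem_def by blast

lemma psi_at_one_const: "a \<in> carr \<Longrightarrow> \<psi> a 1 g = \<psi> a 1 h"
  using psi_join_alg_mem unfolding join_alg_mem_def by blast

lemma psi_equivariant: "a \<in> carr \<Longrightarrow> t \<in> {0..1} \<Longrightarrow> \<psi> (\<alpha> h a) t g = \<alpha> h (\<psi> a t (g + h))"
  using equivariant_psi unfolding equivariant_join_hom_def Let_def by blast

lemma psi_eval_hom: "t \<in> {0..1} \<Longrightarrow> unital_star_hom A A (\<lambda>a. \<psi> a t g)"
  using equivariant_psi psi_closed unfolding equivariant_join_hom_def unital_star_hom_def Let_def by simp

lemma character_join_power_map:
  "x \<in> join_reps (Suc n) \<Longrightarrow> unital_star_hom A complex_cstar (\<lambda>a. \<Psi> n a x)"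
proof (induction n arbitrary: x)
  case 0
  show ?case
    using character_scalar_coeff[OF psi_eval_hom] psi_at_zero_scalar by simp
next
  case (Suc n)
  have "unital_star_hom A A (\<lambda>a. \<psi> a (1 - fst x 0) (snd x 0))"
    using join_reps_one_minus_param[OF Suc.prems] by (rule psi_eval_hom)
  moreover have "unital_star_hom A complex_cstar (\<lambda>b. \<Psi> n b (join_tail x))"
    using Suc.IH join_tail_in_join_reps[OF Suc.prems] .
  ultimately have "unital_star_hom A complex_cstar
      ((\<lambda>b. \<Psi> n b (join_tail x)) \<circ> (\<lambda>a. \<psi> a (1 - fst x 0) (snd x 0)))"
    by (rule unital_star_hom_comp)
  then show ?case
    by (simp add: o_def)
qed

lemma join_power_map_smult_one: "x \<in> join_reps (Suc n) \<Longrightarrow> \<Psi> n (c \<odot> \<one>) x = c"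
  using unital_star_hom_smult_one[OF character_join_power_map] by (simp add: complex_cstar_def)

lemma join_power_map_equivariant:
  "x \<in> join_reps (Suc n) \<Longrightarrow> a \<in> carr \<Longrightarrow> \<Psi> n (\<alpha> h a) x = \<Psi> n a (join_act (Suc n) h x)"
proof (induction n arbitrary: a x)
  case 0
  obtain c where "\<psi> a 0 (snd x 0 + h) = c \<odot> \<one>"
    using psi_at_zero_scalar[OF 0(2)] by blast
  then show ?case
    using 0 psi_equivariant unital_star_hom_smult_one[OF alpha_hom] by (simp add: join_act_def)
next
  case (Suc n)
  let ?t = "1 - fst x 0" and ?g = "snd x 0"
  have t: "?t \<in> {0..1}"
    using join_reps_one_minus_param[OF Suc.prems(1)] .
  have "\<Psi> (Suc n) (\<alpha> h a) x = \<Psi> n (\<alpha> h (\<psi> a ?t (?g + h))) (join_tail x)"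
    using psi_equivariant[OF Suc.prems(2) t] by simp
  also have "\<dots> = \<Psi> n (\<psi> a ?t (?g + h)) (join_act (Suc n) h (join_tail x))"
    using Suc.IH join_tail_in_join_reps Suc.prems psi_closed t by blast
  also have "\<dots> = \<Psi> (Suc n) a (join_act (Suc (Suc n)) h x)"
    by (simp add: join_tail_join_act) (simp add: join_act_def)
  finally show ?case .
qed

lemma join_power_map_join_move:
  "join_move (Suc n) x y \<Longrightarrow> a \<in> carr \<Longrightarrow> \<Psi> n a x = \<Psi> n a y"
proof (induction n arbitrary: a x y)
  case 0
  then show ?case
    unfolding join_move_def by simp
next
  case (Suc n)
  have x: "x \<in> join_reps (Suc (Suc n))" and y: "y \<in> join_reps (Suc (Suc n))"
    using Suc.prems(1) unfolding join_move_def by auto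
  obtain k where k: "k < Suc n" and
    collapse: "(fst x = fst y \<and> fst x k = 0 \<and> (\<forall>i. i \<noteq> k \<longrightarrow> snd x i = snd y i)) \<or>
      (fst x k = 1 \<and> fst y k = 1 \<and> (\<forall>i\<le>k. fst x i = fst y i \<and> snd x i = snd y i))"
    using Suc.prems(1) unfolding join_move_def by auto
  show ?case
  proof (cases k)
    case 0
    from collapse show ?thesis
    proof
      assume "fst x = fst y \<and> fst x k = 0 \<and> (\<forall>i. i \<noteq> k \<longrightarrow> snd x i = snd y i)"
      then have "join_tail x = join_tail y" "fst x 0 = 0" "fst y 0 = 0"
        using 0 unfolding join_tail_def by auto
      then show ?thesis
        using psi_at_one_const[OF Suc.prems(2), of "snd x 0" "snd y 0"] by simp
    next
      assume "fst x k = 1 \<and> fst y k = 1 \<and> (\<forall>i\<le>k. fst x i = fst y i \<and> snd x i = snd y i)"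
      moreover obtain c where "\<psi> a 0 (snd x 0) = c \<odot> \<one>"
        using psi_at_zero_scalar[OF Suc.prems(2)] by blast
      ultimately show ?thesis
        using 0 join_power_map_smult_one join_tail_in_join_reps[OF x] join_tail_in_join_reps[OF y]
        by simp
    qed
  next
    case (Suc k')
    have "join_move (Suc n) (join_tail x) (join_tail y)"
      unfolding join_move_def
      using join_tail_in_join_reps[OF x] join_tail_in_join_reps[OF y] k collapse Suc
      by (intro conjI exI[of _ k']) (auto simp: join_tail_def)
    moreover have "\<psi> a (1 - fst x 0) (snd x 0) \<in> carr"
      using psi_closed[OF Suc.prems(2) join_reps_one_minus_param[OF x]] .
    moreover have "fst x 0 = fst y 0" "snd x 0 = snd y 0"
      using collapse Suc by auto
    ultimately show ?thesis
      using Suc.IH by simp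
  qed
qed

lemma continuous_on_join_power_map: "a \<in> carr \<Longrightarrow> continuous_on (join_reps (Suc n)) (\<Psi> n a)"
proof (induction n arbitrary: a)
  case 0
  have "cs_continuous_on A (join_reps (Suc 0)) (\<lambda>x. (\<lambda>(t, g). \<psi> a t g) (0, snd x 0))"
    by (rule cs_continuous_on_compose[OF psi_continuous[OF 0]])
      (use 0 psi_closed in \<open>auto intro!: continuous_intros continuous_on_snd_apply\<close>)
  then show ?case
    using psi_at_zero_scalar[OF 0] by (simp add: continuous_on_scalar_coeff)
next
  case (Suc n)
  let ?R = "join_reps (Suc (Suc n)) :: ((nat \<Rightarrow> real) \<times> (nat \<Rightarrow> 'g)) set"
  let ?B = "\<lambda>y. \<psi> a (1 - fst y 0) (snd y 0)"
  have B_closed: "\<forall>y\<in>?R. ?B y \<in> carr"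
    using psi_closed[OF Suc.prems] join_reps_one_minus_param by blast
  have "cs_continuous_on A ?R (\<lambda>y. (\<lambda>(t, g). \<psi> a t g) (1 - fst y 0, snd y 0))"
  proof (rule cs_continuous_on_compose[OF psi_continuous[OF Suc.prems]])
    show "\<forall>p\<in>{0..1} \<times> UNIV. (\<lambda>(t, g). \<psi> a t g) p \<in> carr"
      using psi_closed[OF Suc.prems] by auto
    show "continuous_on ?R (\<lambda>y. (1 - fst y 0, snd y 0))"
      by (intro continuous_intros continuous_on_fst_apply continuous_on_snd_apply)
    show "(\<lambda>y. (1 - fst y 0, snd y 0)) ` ?R \<subseteq> {0..1} \<times> UNIV"
      by (intro image_subsetI SigmaI UNIV_I join_reps_one_minus_param)
  qed
  then have B: "cs_continuous_on A ?R ?B"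
    by simp
  have "continuous_on ?R (\<lambda>y. \<Psi> n b (join_tail y))" if "b \<in> carr" for b
    using continuous_on_compose2[OF Suc.IH[OF that] continuous_on_join_tail] join_tail_in_join_reps
    by blast
  moreover have "cmod (\<Psi> n b (join_tail y) - \<Psi> n b' (join_tail y)) \<le> norm_A (b \<ominus> b')"
    if b: "b \<in> carr" "b' \<in> carr" and y: "y \<in> ?R" for b b' y
  proof -
    have character: "unital_star_hom A complex_cstar (\<lambda>c. \<Psi> n c (join_tail y))"
      using character_join_power_map join_tail_in_join_reps[OF y] .
    show ?thesis
      using character_diff[OF character b] norm_character_le[OF character diff_closed[OF b]] by simp
  qed
  ultimately have "continuous_on ?R (\<lambda>y. \<Psi> n (?B y) (join_tail y))"
    using B B_closed by (intro continuous_on_apply_contractive) auto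
  then show ?case
    by simp
qed

end

theorem mainTheorem3:
  fixes A :: "'a cstar_alg"
    and \<alpha> :: "'g::{topological_group_add, t2_space} \<Rightarrow> 'a \<Rightarrow> 'a"
    and \<psi> :: "'a \<Rightarrow> real \<Rightarrow> 'g \<Rightarrow> 'a"
  assumes "compact (UNIV :: 'g set)"
    and "unital_cstar_alg A"
    and "cstar_action A \<alpha>"
    and "equivariant_join_hom A \<alpha> \<psi>"
  shows "\<forall>n::nat. n \<ge> 1 \<longrightarrow> (\<exists>\<phi>. equivariant_join_power_hom A \<alpha> n \<phi>)"
proof (intro allI impI)
  fix n :: nat
  assume "n \<ge> 1"
  then obtain m where n: "n = Suc m"
    using not0_implies_Suc by fastforce
  interpret equivariant_join A \<alpha> \<psi>
    using assms by unfold_locales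
  have "equivariant_join_power_hom A \<alpha> (Suc m) (\<Psi> m)"
    unfolding equivariant_join_power_hom_def Let_def C_join_def
    using continuous_on_join_power_map join_power_map_join_move join_power_map_equivariant
      character_join_power_map[unfolded unital_star_hom_complex_iff]
    by auto
  then show "\<exists>\<phi>. equivariant_join_power_hom A \<alpha> n \<phi>"
    unfolding n by blast
qed

end
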